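(* Let $p$ be an odd prime and let $(G,H,T)$ be the envelope of a right conjugacy closed loop of order $2p$. Let $K$ be a subgroup with $H\lneq K\lneq G$, $|G:K|=2$ and $|K:H|=p$. Let $L\le H$ with $L\trianglelefteq K$. Then for all $a\in G\setminus K$ we have $L\cap L^a=1$ and $LL^a=L\times L^a\trianglelefteq G$.
   Context: For a finite loop $\mathcal{L}$ with identity $e$: $G=\langle R_a\mid a\in\mathcal L\rangle$ with $R_a\colon x\mapsto xa$, $H$ the stabilizer of $e$ in $G$, $T=\{R_a\}$; $(G,H,T)$ is the envelope; the loop is right conjugacy closed if $T$ is a union of conjugacy classes of $G$. *)

theory Defs
  imports "HOL-Algebra.Algebra" "HOL-Computational_Algebra.Primes"
begin

definition is_loop :: "'a set \<Rightarrow> ('a \<Rightarrow> 'a \<Rightarrow> 'a) \<Rightarrow> 'a \<Rightarrow> bool" where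
  "is_loop Q m e \<longleftrightarrow>
     e \<in> Q \<and> (\<forall>x\<in>Q. \<forall>y\<in>Q. m x y \<in> Q) \<and>
     (\<forall>x\<in>Q. m e x = x \<and> m x e = x) \<and>
     (\<forall>a\<in>Q. \<forall>b\<in>Q. \<exists>!x. x \<in> Q \<and> m a x = b) \<and>
     (\<forall>a\<in>Q. \<forall>b\<in>Q. \<exists>!y. y \<in> Q \<and> m y a = b)"

definition rtrans :: "'a set \<Rightarrow> ('a \<Rightarrow> 'a \<Rightarrow> 'a) \<Rightarrow> 'a \<Rightarrow> ('a \<Rightarrow> 'a)" where
  "rtrans Q m a = (\<lambda>x\<in>Q. m x a)"

definition env_T :: "'a set \<Rightarrow> ('a \<Rightarrow> 'a \<Rightarrow> 'a) \<Rightarrow> ('a \<Rightarrow> 'a) set" where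
  "env_T Q m = rtrans Q m ` Q"

definition env_G :: "'a set \<Rightarrow> ('a \<Rightarrow> 'a \<Rightarrow> 'a) \<Rightarrow> ('a \<Rightarrow> 'a) monoid" where
  "env_G Q m = (BijGroup Q)\<lparr>carrier := generate (BijGroup Q) (env_T Q m)\<rparr>"

definition env_H :: "'a set \<Rightarrow> ('a \<Rightarrow> 'a \<Rightarrow> 'a) \<Rightarrow> 'a \<Rightarrow> ('a \<Rightarrow> 'a) set" where
  "env_H Q m e = {g \<in> carrier (env_G Q m). g e = e}"

definition is_RCC_loop :: "'a set \<Rightarrow> ('a \<Rightarrow> 'a \<Rightarrow> 'a) \<Rightarrow> 'a \<Rightarrow> bool" where
  "is_RCC_loop Q m e \<longleftrightarrow> is_loop Q m e \<and>
     (\<forall>g\<in>carrier (env_G Q m). \<forall>t\<in>env_T Q m.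
        g \<otimes>\<^bsub>env_G Q m\<^esub> t \<otimes>\<^bsub>env_G Q m\<^esub> inv\<^bsub>env_G Q m\<^esub> g \<in> env_T Q m)"

end

theory Submission
  imports Defs
begin

(* Only three properties of the envelope are used: K has index 2 in G, L is normal in K, and H,
   the stabiliser of a point under the faithful transitive action of G on the loop, contains no
   nontrivial normal subgroup of G. As K is normal in G, conjugation by elements of K fixes both L and L^a, while
   conjugation by elements outside K interchanges them. Hence the intersection of L and L^a is a
   normal subgroup of G inside H, so it is trivial; L and L^a normalise each other, so their
   commutators lie in that trivial intersection; and LL^a, normal in K, is fixed by every
   conjugation. *)

context group begin

lemma conj_set_eq_image:
  "inv g <# A #> g = (\<lambda>y. inv g \<otimes> y \<otimes> g) ` A"
  by (auto simp: l_coset_def r_coset_def)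

lemma conj_set_mult:
  assumes "A \<subseteq> carrier G" "g \<in> carrier G" "h \<in> carrier G"
  shows "inv (g \<otimes> h) <# A #> (g \<otimes> h) = inv h <# (inv g <# A #> g) #> h"
  unfolding conj_set_eq_image image_image
  using assms by (intro image_cong) (auto simp: inv_mult_group m_assoc subsetD)

lemma conj_set_Int:
  assumes "A \<subseteq> carrier G" "B \<subseteq> carrier G" "g \<in> carrier G"
  shows "inv g <# (A \<inter> B) #> g = (inv g <# A #> g) \<inter> (inv g <# B #> g)"
proof -
  have "inj_on (\<lambda>y. inv g \<otimes> y \<otimes> g) (A \<union> B)"
    using assms by (intro inj_onI) (auto simp: subset_iff)
  then show ?thesis
    unfolding conj_set_eq_image by (rule inj_on_image_Int) auto
qed

lemma conj_set_set_mult: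
  assumes "A \<subseteq> carrier G" "B \<subseteq> carrier G" "g \<in> carrier G"
  shows "inv g <# (A <#> B) #> g = (inv g <# A #> g) <#> (inv g <# B #> g)"
proof -
  have "inv g \<otimes> (x \<otimes> y) \<otimes> g = (inv g \<otimes> x \<otimes> g) \<otimes> (inv g \<otimes> y \<otimes> g)"
    if "x \<in> A" "y \<in> B" for x y
    using that assms by (simp add: m_assoc subsetD) (simp add: m_assoc[symmetric] subsetD)
  then show ?thesis
    unfolding conj_set_eq_image set_mult_def by (simp add: image_UN cong: SUP_cong)
qed

lemma normal_of_conj_set:
  assumes "subgroup N G" "\<And>g. g \<in> carrier G \<Longrightarrow> inv g <# N #> g \<subseteq> N"
  shows "N \<lhd> G"
proof (rule normal_invI[OF assms(1)])
  fix x h assume "x \<in> carrier G" "h \<in> N"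
  moreover have "x <# N #> inv x \<subseteq> N"
    using assms(2)[of "inv x"] \<open>x \<in> carrier G\<close> by simp
  ultimately show "x \<otimes> h \<otimes> inv x \<in> N"
    by (auto simp: l_coset_def r_coset_def)
qed

lemma conj_set_mono:
  "A \<subseteq> B \<Longrightarrow> inv g <# A #> g \<subseteq> inv g <# B #> g"
  unfolding conj_set_eq_image by (rule image_mono)

lemma commute_of_mutually_normalizing:
  assumes A: "subgroup A G" and B: "subgroup B G" and trivial: "A \<inter> B = {\<one>}"
    and A_normalizes: "\<And>x. x \<in> A \<Longrightarrow> inv x <# B #> x \<subseteq> B"
    and B_normalizes: "\<And>y. y \<in> B \<Longrightarrow> inv y <# A #> y \<subseteq> A"
    and x: "x \<in> A" and y: "y \<in> B"
  shows "x \<otimes> y = y \<otimes> x"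
proof -
  have xc: "x \<in> carrier G" and yc: "y \<in> carrier G"
    using subgroup.mem_carrier[OF A x] subgroup.mem_carrier[OF B y] .
  define c where "c = inv x \<otimes> inv y \<otimes> x \<otimes> y"
  have "inv x \<otimes> inv y \<otimes> x \<in> B"
    using A_normalizes[OF x] subgroup.m_inv_closed[OF B y] unfolding conj_set_eq_image by blast
  then have "c \<in> B"
    unfolding c_def using subgroup.m_closed[OF B _ y] by blast
  moreover have "inv y \<otimes> x \<otimes> y \<in> A"
    using B_normalizes[OF y] x unfolding conj_set_eq_image by blast
  then have "c \<in> A"
    unfolding c_def using subgroup.m_closed[OF A subgroup.m_inv_closed[OF A x]] xc yc
    by (simp add: m_assoc)
  ultimately have "c = \<one>"
    using trivial by blast
  moreover have "c = inv (y \<otimes> x) \<otimes> (x \<otimes> y)"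
    unfolding c_def using xc yc by (simp add: inv_mult_group m_assoc)
  ultimately show ?thesis
    using xc yc inv_solve_left[of \<one> "y \<otimes> x" "x \<otimes> y"] by simp
qed

lemma index_two_mult_inv_mem:
  assumes K: "subgroup K G" "card (rcosets K) = 2"
    and g: "g \<in> carrier G" "g \<notin> K" and h: "h \<in> carrier G" "h \<notin> K"
  shows "h \<otimes> inv g \<in> K"
proof -
  have finite: "finite (rcosets K)"
    using K(2) by (intro card_ge_0_finite) simp
  have cosets: "{K, K #> g, K #> h} \<subseteq> rcosets K"
    using subgroup.subgroup_in_rcosets[OF K(1) is_group] rcosetsI[OF subgroup.subset[OF K(1)]] g(1) h(1)
    by blast
  have g_coset: "K #> g \<noteq> K" and h_coset: "K #> h \<noteq> K"
    using rcos_self[OF g(1) K(1)] rcos_self[OF h(1) K(1)] g(2) h(2) by auto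
  have "K #> h = K #> g"
  proof (rule ccontr)
    assume "K #> h \<noteq> K #> g"
    then have "card {K, K #> g, K #> h} = 3"
      using g_coset h_coset by simp
    moreover have "card {K, K #> g, K #> h} \<le> card (rcosets K)"
      using card_mono[OF finite cosets] .
    ultimately show False
      using K(2) by simp
  qed
  then have "h \<in> K #> g"
    using rcos_self[OF h(1) K(1)] by simp
  then show ?thesis
    using subgroup.rcos_module_imp[OF K(1) is_group g(1)] by blast
qed

lemma index_two_mult_mem_iff:
  assumes K: "subgroup K G" "card (rcosets K) = 2"
    and x: "x \<in> carrier G" "x \<notin> K" and y: "y \<in> carrier G"
  shows "x \<otimes> y \<in> K \<longleftrightarrow> y \<notin> K"
proof
  assume "x \<otimes> y \<in> K"
  show "y \<notin> K"
  proof
    assume "y \<in> K"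
    with \<open>x \<otimes> y \<in> K\<close> have "x \<otimes> y \<otimes> inv y \<in> K"
      using K(1) by (simp add: subgroup.m_closed subgroup.m_inv_closed)
    with x y show False
      by (simp add: m_assoc)
  qed
next
  assume "y \<notin> K"
  then have "inv y \<notin> K"
    using subgroup.m_inv_closed[OF K(1), of "inv y"] y by auto
  then show "x \<otimes> y \<in> K"
    using index_two_mult_inv_mem[OF K _ _ x, of "inv y"] y by simp
qed

lemma index_two_normal:
  assumes K: "subgroup K G" "card (rcosets K) = 2"
  shows "K \<lhd> G"
proof (rule normal_invI[OF K(1)])
  fix g k assume g: "g \<in> carrier G" and k: "k \<in> K"
  have kc: "k \<in> carrier G"
    using subgroup.mem_carrier[OF K(1) k] .
  show "g \<otimes> k \<otimes> inv g \<in> K"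
  proof (cases "g \<in> K")
    case True
    then show ?thesis
      using K(1) k by (simp add: subgroup.m_closed subgroup.m_inv_closed)
  next
    case False
    then have "g \<otimes> k \<notin> K"
      using index_two_mult_mem_iff[OF K g False kc] k by simp
    then show ?thesis
      using index_two_mult_inv_mem[OF K g False] g kc by simp
  qed
qed

end

lemma (in normal) conj_set_eq:
  assumes "g \<in> carrier G"
  shows "inv g <# H #> g = H"
  using assms subset by (simp add: coset_assoc[symmetric] coset_eq lcos_m_assoc lcos_mult_one)

locale index_two_conjugates = group G for G (structure) +
  fixes K L a
  assumes index_two: "subgroup K G" "card (rcosets K) = 2"
    and normal_in_K: "L \<lhd> G\<lparr>carrier := K\<rparr>"
    and outside: "a \<in> carrier G" "a \<notin> K"
begin

abbreviation La where "La \<equiv> inv a <# L #> a"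

lemma group_K: "group (G\<lparr>carrier := K\<rparr>)"
  using subgroup.subgroup_is_group[OF index_two(1) is_group] .

lemma L_subset_K: "L \<subseteq> K"
  using subgroup.subset[OF normal_imp_subgroup[OF normal_in_K]] by simp

lemma subgroup_L: "subgroup L G"
  using incl_subgroup[OF index_two(1) normal_imp_subgroup[OF normal_in_K]] .

lemma conj_set_L_inside:
  assumes "k \<in> K"
  shows "inv k <# L #> k = L"
  using normal.conj_set_eq[OF normal_in_K] assms index_two(1) by simp

lemma conj_set_L_left_mult:
  assumes "k \<in> K" "x \<in> carrier G"
  shows "inv (k \<otimes> x) <# L #> (k \<otimes> x) = inv x <# L #> x"
  using assms conj_set_mult[of L k x] conj_set_L_inside L_subset_K
    subgroup.subset[OF index_two(1)] by auto

lemma conj_set_L_outside: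
  assumes "x \<in> carrier G" "x \<notin> K"
  shows "inv x <# L #> x = La"
proof -
  have "x \<otimes> inv a \<in> K"
    using index_two_mult_inv_mem[OF index_two outside assms] .
  moreover have "x = (x \<otimes> inv a) \<otimes> a"
    using assms outside by (simp add: m_assoc)
  ultimately show ?thesis
    using conj_set_L_left_mult outside(1) by metis
qed

lemma conj_set_La:
  assumes "g \<in> carrier G"
  shows "inv g <# La #> g = (if g \<in> K then La else L)"
proof -
  have "inv g <# La #> g = inv (a \<otimes> g) <# L #> (a \<otimes> g)"
    using conj_set_mult[of L a g] assms outside L_subset_K subgroup.subset[OF index_two(1)] by auto
  moreover have "a \<otimes> g \<in> K \<longleftrightarrow> g \<notin> K"
    using index_two_mult_mem_iff[OF index_two outside assms] .
  ultimately show ?thesis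
    using conj_set_L_inside conj_set_L_outside outside(1) assms by auto
qed

lemma subgroup_La: "subgroup La G"
  using subgroup_conjugation_is_surj1[OF outside(1) subgroup_L] .

lemma La_subset_K: "La \<subseteq> K"
  using conj_set_mono[OF L_subset_K, of a] normal.conj_set_eq[OF index_two_normal[OF index_two] outside(1)]
  by (rule ord_le_eq_trans)

lemma normal_La_in_K: "La \<lhd> G\<lparr>carrier := K\<rparr>"
proof (rule group.normal_of_conj_set[OF group_K])
  show "subgroup La (G\<lparr>carrier := K\<rparr>)"
    using subgroup_incl[OF subgroup_La index_two(1) La_subset_K] .
next
  fix k assume "k \<in> carrier (G\<lparr>carrier := K\<rparr>)"
  then have "k \<in> K" "k \<in> carrier G"
    using subgroup.mem_carrier[OF index_two(1)] by auto
  then show "inv\<^bsub>G\<lparr>carrier := K\<rparr>\<^esub> k <#\<^bsub>G\<lparr>carrier := K\<rparr>\<^esub> La #>\<^bsub>G\<lparr>carrier := K\<rparr>\<^esub> k \<subseteq> La"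
    using conj_set_La index_two(1) by simp
qed

lemma normal_Int_L_La: "L \<inter> La \<lhd> G"
proof (rule normal_of_conj_set)
  show "subgroup (L \<inter> La) G"
    using subgroup_L subgroup_La by (rule subgroups_Inter_pair)
next
  fix g assume "g \<in> carrier G"
  then show "inv g <# (L \<inter> La) #> g \<subseteq> L \<inter> La"
    using conj_set_Int conj_set_La conj_set_L_inside conj_set_L_outside
      subgroup.subset[OF subgroup_L] subgroup.subset[OF subgroup_La]
    by auto
qed

lemma normal_set_mult_L_La: "L <#> La \<lhd> G"
proof (rule normal_of_conj_set)
  have "L <#> La \<lhd> G\<lparr>carrier := K\<rparr>"
    using group.normal_subgroup_set_mult_closed[OF group_K normal_in_K normal_La_in_K] by simp
  then show "subgroup (L <#> La) G"
    using incl_subgroup[OF index_two(1)] normal_imp_subgroup by blast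
next
  have swap: "La <#> L = L <#> La"
    using commut_normal_subgroup[OF index_two(1) normal_in_K normal_imp_subgroup[OF normal_La_in_K]] .
  fix g assume "g \<in> carrier G"
  then show "inv g <# (L <#> La) #> g \<subseteq> L <#> La"
    using conj_set_set_mult conj_set_La conj_set_L_inside conj_set_L_outside
      subgroup.subset[OF subgroup_L] subgroup.subset[OF subgroup_La] swap
    by auto
qed

lemma direct_product_L_La:
  assumes core_free: "\<And>N. N \<lhd> G \<Longrightarrow> N \<subseteq> L \<Longrightarrow> N = {\<one>}"
  shows "L \<inter> La = {\<one>} \<and> (\<forall>x\<in>L. \<forall>y\<in>La. x \<otimes> y = y \<otimes> x) \<and> L <#> La \<lhd> G"
proof -
  have trivial_Int: "L \<inter> La = {\<one>}"
    using core_free[OF normal_Int_L_La] by blast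
  have "x \<otimes> y = y \<otimes> x" if "x \<in> L" "y \<in> La" for x y
  proof (rule commute_of_mutually_normalizing[OF subgroup_L subgroup_La trivial_Int _ _ that])
    fix x assume "x \<in> L"
    then have "x \<in> K" "x \<in> carrier G"
      using L_subset_K subgroup.mem_carrier[OF index_two(1)] by auto
    then show "inv x <# La #> x \<subseteq> La"
      using conj_set_La by simp
  next
    fix y assume "y \<in> La"
    then show "inv y <# L #> y \<subseteq> L"
      using conj_set_L_inside La_subset_K by blast
  qed
  then show ?thesis
    using trivial_Int normal_set_mult_L_La by blast
qed

end

lemma is_loopD:
  assumes "is_loop Q m e"
  shows "e \<in> Q" and "\<And>x. x \<in> Q \<Longrightarrow> m e x = x"
    and "\<And>x y. x \<in> Q \<Longrightarrow> y \<in> Q \<Longrightarrow> m x y \<in> Q"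
    and "\<And>a b. a \<in> Q \<Longrightarrow> b \<in> Q \<Longrightarrow> \<exists>!y. y \<in> Q \<and> m y a = b"
  using assms unfolding is_loop_def by simp_all

lemma rtrans_in_Bij:
  assumes "is_loop Q m e" "a \<in> Q"
  shows "rtrans Q m a \<in> Bij Q"
proof -
  have "bij_betw (\<lambda>x. m x a) Q Q"
  proof (rule bij_betwI')
    fix x y assume "x \<in> Q" "y \<in> Q"
    moreover have "\<exists>!z. z \<in> Q \<and> m z a = m x a"
      using is_loopD(3,4)[OF assms(1)] assms(2) \<open>x \<in> Q\<close> by simp
    ultimately show "(m x a = m y a) = (x = y)"
      unfolding Ex1_def by metis
  next
    show "\<And>x. x \<in> Q \<Longrightarrow> m x a \<in> Q"
      using is_loopD(3)[OF assms(1) _ assms(2)] .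
  next
    fix y assume "y \<in> Q"
    then show "\<exists>x\<in>Q. y = m x a"
      using ex1_implies_ex[OF is_loopD(4)[OF assms(1,2) \<open>y \<in> Q\<close>]] by metis
  qed
  then show ?thesis
    unfolding rtrans_def Bij_def by simp
qed

lemma subgroup_env_G:
  assumes "is_loop Q m e"
  shows "subgroup (carrier (env_G Q m)) (BijGroup Q)"
proof -
  have "env_T Q m \<subseteq> carrier (BijGroup Q)"
    using rtrans_in_Bij[OF assms] by (auto simp: env_T_def BijGroup_def)
  then show ?thesis
    unfolding env_G_def using group.generate_is_subgroup[OF group_BijGroup] by simp
qed

lemma group_env_G:
  assumes "is_loop Q m e"
  shows "group (env_G Q m)"
  using subgroup.subgroup_is_group[OF subgroup_env_G[OF assms] group_BijGroup]
  by (simp add: env_G_def)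

lemma carrier_env_G_subset_Bij:
  assumes "is_loop Q m e"
  shows "carrier (env_G Q m) \<subseteq> Bij Q"
  using subgroup.subset[OF subgroup_env_G[OF assms]] by (simp add: BijGroup_def)

lemma env_G_mult:
  assumes "f \<in> Bij Q" "g \<in> Bij Q"
  shows "f \<otimes>\<^bsub>env_G Q m\<^esub> g = compose Q f g"
  using assms by (simp add: env_G_def BijGroup_def)

lemma rtrans_in_env_G:
  "x \<in> Q \<Longrightarrow> rtrans Q m x \<in> carrier (env_G Q m)"
  unfolding env_G_def env_T_def by (auto intro: generate.incl)

lemma env_H_core_free:
  assumes loop: "is_loop Q m e" and N: "N \<lhd> env_G Q m" "N \<subseteq> env_H Q m e"
  shows "N = {\<one>\<^bsub>env_G Q m\<^esub>}"
proof -
  interpret normal N "env_G Q m" by (rule N(1))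
  have "n = \<one>\<^bsub>env_G Q m\<^esub>" if n: "n \<in> N" for n
  proof -
    have nG: "n \<in> carrier (env_G Q m)"
      using n subset by blast
    have "n x = x" if x: "x \<in> Q" for x
    proof -
      define r where "r = rtrans Q m x"
      have rG: "r \<in> carrier (env_G Q m)"
        unfolding r_def using rtrans_in_env_G[OF x] .
      define h where "h = inv\<^bsub>env_G Q m\<^esub> r \<otimes>\<^bsub>env_G Q m\<^esub> n \<otimes>\<^bsub>env_G Q m\<^esub> r"
      have "h \<in> env_H Q m e"
        unfolding h_def using inv_op_closed1[OF rG n] N(2) by blast
      then have hG: "h \<in> carrier (env_G Q m)" and "h e = e"
        by (auto simp: env_H_def)
      have "r \<otimes>\<^bsub>env_G Q m\<^esub> h = n \<otimes>\<^bsub>env_G Q m\<^esub> r"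
        unfolding h_def using rG nG by (simp add: m_assoc[symmetric])
      then have "compose Q r h e = compose Q n r e"
        using rG hG nG carrier_env_G_subset_Bij[OF loop] by (metis env_G_mult subsetD)
      moreover have "r e = x"
        using is_loopD(1,2)[OF loop] x unfolding r_def rtrans_def by simp
      ultimately show "n x = x"
        using \<open>h e = e\<close> is_loopD(1)[OF loop] by (simp add: compose_def)
    qed
    moreover have "n \<in> extensional Q"
      using nG carrier_env_G_subset_Bij[OF loop] by (auto simp: Bij_def)
    ultimately have "n = (\<lambda>x\<in>Q. x)"
      by (auto intro: extensionalityI[of _ Q])
    then show ?thesis
      by (simp add: env_G_def BijGroup_def)
  qed
  then show ?thesis
    using subgroup.one_closed[OF normal_imp_subgroup[OF N(1)]] by auto
qed

theorem lemma5p2: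
  fixes Q :: "'a set" and m :: "'a \<Rightarrow> 'a \<Rightarrow> 'a" and e :: 'a
    and p :: nat and K L :: "('a \<Rightarrow> 'a) set"
  assumes "Factorial_Ring.prime p" and "odd p"
    and "is_RCC_loop Q m e" and "finite Q" and "card Q = 2 * p"
    and "subgroup K (env_G Q m)"
    and "env_H Q m e \<subset> K" and "K \<subset> carrier (env_G Q m)"
    and "card (rcosets\<^bsub>env_G Q m\<^esub> K) = 2"
    and "card (rcosets\<^bsub>(env_G Q m)\<lparr>carrier := K\<rparr>\<^esub> (env_H Q m e)) = p"
    and "subgroup L (env_G Q m)" and "L \<subseteq> env_H Q m e"
    and "L \<lhd> (env_G Q m)\<lparr>carrier := K\<rparr>"
  shows "\<forall>a \<in> carrier (env_G Q m) - K.
           (let La = (inv\<^bsub>env_G Q m\<^esub> a <#\<^bsub>env_G Q m\<^esub> L) #>\<^bsub>env_G Q m\<^esub> a in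
              L \<inter> La = {\<one>\<^bsub>env_G Q m\<^esub>}
            \<and> (\<forall>x\<in>L. \<forall>y\<in>La. x \<otimes>\<^bsub>env_G Q m\<^esub> y = y \<otimes>\<^bsub>env_G Q m\<^esub> x)
            \<and> L <#>\<^bsub>env_G Q m\<^esub> La \<lhd> env_G Q m)"
proof
  fix a assume a: "a \<in> carrier (env_G Q m) - K"
  have loop: "is_loop Q m e"
    using assms(3) unfolding is_RCC_loop_def by blast
  have conjugates: "index_two_conjugates (env_G Q m) K L a"
    using group_env_G[OF loop] assms(6,9,13) a
    by (intro index_two_conjugates.intro index_two_conjugates_axioms.intro) auto
  have core_free: "\<And>N. N \<lhd> env_G Q m \<Longrightarrow> N \<subseteq> L \<Longrightarrow> N = {\<one>\<^bsub>env_G Q m\<^esub>}"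
    using env_H_core_free[OF loop] assms(12) by blast
  show "let La = (inv\<^bsub>env_G Q m\<^esub> a <#\<^bsub>env_G Q m\<^esub> L) #>\<^bsub>env_G Q m\<^esub> a in
      L \<inter> La = {\<one>\<^bsub>env_G Q m\<^esub>}
      \<and> (\<forall>x\<in>L. \<forall>y\<in>La. x \<otimes>\<^bsub>env_G Q m\<^esub> y = y \<otimes>\<^bsub>env_G Q m\<^esub> x)
      \<and> L <#>\<^bsub>env_G Q m\<^esub> La \<lhd> env_G Q m"
    unfolding Let_def by (rule index_two_conjugates.direct_product_L_La[OF conjugates core_free])
qed

end
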